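(* Let $0<\epsilon<1/2$, let $C=1-h(\epsilon)$ with $h(\epsilon)=-\epsilon\log_2\epsilon-(1-\epsilon)\log_2(1-\epsilon)$, let $0<R<C$ and $0<\rho<1$ be fixed, and set $k=k(n)=\lfloor Rn\rfloor$. If $\mathbf{A}$ is a random $n\times k$ binary matrix with the Bernoulli$(n,k,\rho)$ distribution, then \[ \lim_{n\to\infty}\mathbb{E}_{\mathbf{A}}\big(p_c(\mathbf{A})\big)=1 . \]
   Context: All arithmetic on binary vectors and matrices is in $\mathrm{GF}(2)$. A binary linear code with generating matrix $\mathbf{A}\in\{0,1\}^{n\times k}$ encodes a message $X\in\{0,1\}^k$ as $\mathbf{A}X\in\{0,1\}^n$. Over the binary symmetric channel (BSC) with cross-over probability $\epsilon$, the channel output is $Y=\mathbf{A}X+N$, where $X$ is uniformly distributed on $\{0,1\}^k$ and $N\in\{0,1\}^n$ has i.i.d. Bernoulli$(\epsilon)$ entries, independent of $X$. The decoder, on receiving $Y=y$, outputs a random estimate $\hat X$ drawn from the posterior distribution $\mathbb{P}(X=\cdot\mid Y=y)$. Its probability of correct detection is $p_c(\mathbf{A})=\mathbb{E}_{X,Y}\big[\mathbb{P}(X\mid Y)\big]$, and $p_e(\mathbf{A})=1-p_c(\mathbf{A})$. The Bernoulli$(n,k,\rho)$ distribution on the set $\mathcal{A}_{n\times k}$ of binary $n\times k$ matrices is the one in which all entries are i.i.d. Bernoulli$(\rho)$. *)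

theory Defs
  imports Complex_Main
begin

text \<open>Binary vectors of length m are modelled as functions nat => bool vanishing
  outside {0..<m}; binary n x k matrices as nat => nat => bool vanishing outside
  {0..<n} x {0..<k}. True = 1, False = 0. Arithmetic is in GF(2).\<close>

definition bvecs :: "nat \<Rightarrow> (nat \<Rightarrow> bool) set" where
  "bvecs m = {x. \<forall>i. m \<le> i \<longrightarrow> x i = False}"

definition bmats :: "nat \<Rightarrow> nat \<Rightarrow> (nat \<Rightarrow> nat \<Rightarrow> bool) set" where
  "bmats n k = {A. \<forall>i j. (n \<le> i \<or> k \<le> j) \<longrightarrow> A i j = False}"

definition encode :: "nat \<Rightarrow> nat \<Rightarrow> (nat \<Rightarrow> nat \<Rightarrow> bool) \<Rightarrow> (nat \<Rightarrow> bool) \<Rightarrow> (nat \<Rightarrow> bool)" where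
  "encode n k A x = (\<lambda>i. i < n \<and> odd (card {j. j < k \<and> A i j \<and> x j}))"

definition hdist :: "nat \<Rightarrow> (nat \<Rightarrow> bool) \<Rightarrow> (nat \<Rightarrow> bool) \<Rightarrow> nat" where
  "hdist n u v = card {i. i < n \<and> u i \<noteq> v i}"

text \<open>BSC transition probability P(Y = y | X = x) = P(N = y + A x).\<close>
definition bsc_lik :: "real \<Rightarrow> nat \<Rightarrow> nat \<Rightarrow> (nat \<Rightarrow> nat \<Rightarrow> bool) \<Rightarrow> (nat \<Rightarrow> bool) \<Rightarrow> (nat \<Rightarrow> bool) \<Rightarrow> real" where
  "bsc_lik \<epsilon> n k A x y = \<epsilon> ^ hdist n y (encode n k A x) * (1 - \<epsilon>) ^ (n - hdist n y (encode n k A x))"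

text \<open>Joint law P(X = x, Y = y) with X uniform on {0,1}^k.\<close>
definition joint :: "real \<Rightarrow> nat \<Rightarrow> nat \<Rightarrow> (nat \<Rightarrow> nat \<Rightarrow> bool) \<Rightarrow> (nat \<Rightarrow> bool) \<Rightarrow> (nat \<Rightarrow> bool) \<Rightarrow> real" where
  "joint \<epsilon> n k A x y = bsc_lik \<epsilon> n k A x y / 2 ^ k"

definition out_prob :: "real \<Rightarrow> nat \<Rightarrow> nat \<Rightarrow> (nat \<Rightarrow> nat \<Rightarrow> bool) \<Rightarrow> (nat \<Rightarrow> bool) \<Rightarrow> real" where
  "out_prob \<epsilon> n k A y = (\<Sum>x\<in>bvecs k. joint \<epsilon> n k A x y)"

definition posterior :: "real \<Rightarrow> nat \<Rightarrow> nat \<Rightarrow> (nat \<Rightarrow> nat \<Rightarrow> bool) \<Rightarrow> (nat \<Rightarrow> bool) \<Rightarrow> (nat \<Rightarrow> bool) \<Rightarrow> real" where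
  "posterior \<epsilon> n k A x y = joint \<epsilon> n k A x y / out_prob \<epsilon> n k A y"

text \<open>p_c(A) = E_{X,Y}[P(X | Y)].\<close>
definition p_c :: "real \<Rightarrow> nat \<Rightarrow> nat \<Rightarrow> (nat \<Rightarrow> nat \<Rightarrow> bool) \<Rightarrow> real" where
  "p_c \<epsilon> n k A = (\<Sum>x\<in>bvecs k. \<Sum>y\<in>bvecs n. joint \<epsilon> n k A x y * posterior \<epsilon> n k A x y)"

definition bern_mat :: "real \<Rightarrow> nat \<Rightarrow> nat \<Rightarrow> (nat \<Rightarrow> nat \<Rightarrow> bool) \<Rightarrow> real" where
  "bern_mat \<rho> n k A = (let w = card {(i, j). i < n \<and> j < k \<and> A i j} in \<rho> ^ w * (1 - \<rho>) ^ (n * k - w))"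

definition expected_pc :: "real \<Rightarrow> real \<Rightarrow> nat \<Rightarrow> nat \<Rightarrow> real" where
  "expected_pc \<rho> \<epsilon> n k = (\<Sum>A\<in>bmats n k. bern_mat \<rho> n k A * p_c \<epsilon> n k A)"

definition bin_entropy :: "real \<Rightarrow> real" where
  "bin_entropy e = - e * log 2 e - (1 - e) * log 2 (1 - e)"

end

theory Submission
  imports Defs "HOL-Analysis.Convex" "HOL-Real_Asymp.Real_Asymp"
begin

(* 1. Translation symmetry: decoding is invariant under adding a codeword, so
      1 - p_c(A) equals the error functional zero_error A of the all-zero
      codeword, sum_u W(u|0) (O(u) - W(u|0)) / O(u) with O(u) = sum_z W(u|Az).
   2. The nonzero messages z are split by Hamming weight into light (< W) and
      heavy (>= W) ones; the elementary inequality
      L(a + b)/(L + a + b) <= sqrt(L a) + L^(1-l) b^l separates the two.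
   3. Rows of A are independent and row.z is odd with probability
      q(z) = (1 - (1 - 2 rho)^wt(z)) / 2.  Light words: the Bhattacharyya
      bound gives (1 - q(z)(1 - B))^n with B = 2 sqrt(eps(1 - eps)) < 1, and
      there are only polynomially many of them.  Heavy words: q(z) ~ 1/2, and
      Jensen's inequality gives Gallager's bound M(l)^n (2^k (1/2 + eta)^n)^l,
      exponentially small for small l > 0 because R < 1 - h(eps).
   4. Choosing l, eta and W suitably, both terms tend to zero. *)

section \<open>Finite product spaces of words\<close>

text \<open>Words of length m over an alphabet V, padded with the default symbol d;
  both binary vectors and binary matrices (as words of rows) are instances.\<close>
definition words :: "nat \<Rightarrow> 'a set \<Rightarrow> 'a \<Rightarrow> (nat \<Rightarrow> 'a) set" where
  "words m V d = {x. (\<forall>i<m. x i \<in> V) \<and> (\<forall>i. m \<le> i \<longrightarrow> x i = d)}"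

lemma words_0: "words 0 V d = {\<lambda>_. d}"
  by (auto simp: words_def)

lemma words_Suc: "words (Suc m) V d = (\<lambda>(x,v). x(m:=v)) ` (words m V d \<times> V)"
proof (intro set_eqI iffI)
  fix y assume y: "y \<in> words (Suc m) V d"
  have "(y(m:=d), y m) \<in> words m V d \<times> V" using y by (auto simp: words_def)
  moreover have "y = (\<lambda>(x,v). x(m:=v)) (y(m:=d), y m)" by simp
  ultimately show "y \<in> (\<lambda>(x,v). x(m:=v)) ` (words m V d \<times> V)" by blast
next
  fix y assume "y \<in> (\<lambda>(x,v). x(m:=v)) ` (words m V d \<times> V)"
  then show "y \<in> words (Suc m) V d" by (auto simp: words_def)
qed

lemma words_Suc_inj: "inj_on (\<lambda>(x,v). x(m:=v)) (words m V d \<times> V)"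
proof (rule inj_onI, clarsimp)
  fix x v x' v' assume a: "x \<in> words m V d" "x' \<in> words m V d" "x(m := v) = x'(m := v')"
  have "v = v'" using fun_cong[OF a(3), of m] by simp
  moreover have "x = x'"
  proof
    fix i show "x i = x' i"
      using fun_cong[OF a(3), of i] a(1,2) by (cases "i = m") (auto simp: words_def)
  qed
  ultimately show "x = x' \<and> v = v'" by simp
qed

lemma finite_words: "finite V \<Longrightarrow> finite (words m V d)"
  by (induction m) (auto simp: words_0 words_Suc)

text \<open>Sums of product functions over a product space factor (Fubini for finite
  products); this is how every expectation below is computed.\<close>
lemma sum_words_prod:
  fixes f :: "nat \<Rightarrow> 'a \<Rightarrow> real"
  assumes "finite V"
  shows "(\<Sum>x\<in>words m V d. \<Prod>i<m. f i (x i)) = (\<Prod>i<m. \<Sum>v\<in>V. f i v)"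
proof (induction m)
  case 0 then show ?case by (simp add: words_0)
next
  case (Suc m)
  have "(\<Sum>x\<in>words (Suc m) V d. \<Prod>i<Suc m. f i (x i))
      = (\<Sum>p\<in>words m V d \<times> V. \<Prod>i<Suc m. f i (((\<lambda>(x,v). x(m:=v)) p) i))"
    unfolding words_Suc by (subst sum.reindex[OF words_Suc_inj]) (simp add: comp_def)
  also have "\<dots> = (\<Sum>p\<in>words m V d \<times> V. (\<Prod>i<m. f i (fst p i)) * f m (snd p))"
    by (intro sum.cong refl) (auto intro!: prod.cong simp: lessThan_Suc mult.commute)
  also have "\<dots> = (\<Sum>x\<in>words m V d. \<Sum>v\<in>V. (\<Prod>i<m. f i (x i)) * f m v)"
    by (simp add: sum.cartesian_product split_def)
  also have "\<dots> = (\<Sum>x\<in>words m V d. \<Prod>i<m. f i (x i)) * (\<Sum>v\<in>V. f m v)"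
    by (simp add: sum_product)
  finally show ?case using Suc by (simp add: lessThan_Suc mult.commute)
qed

lemma bvecs_words: "bvecs m = words m UNIV False"
  by (auto simp: bvecs_def words_def)

lemma bmats_words: "bmats n k = words n (bvecs k) (\<lambda>_. False)"
  by (auto simp: bmats_def words_def bvecs_def fun_eq_iff) (metis not_le)

lemma finite_bvecs[simp]: "finite (bvecs m)"
  by (simp add: bvecs_words finite_words)

lemma finite_bmats[simp]: "finite (bmats n k)"
  by (simp add: bmats_words finite_words)

lemma sum_bvecs_prod:
  fixes f :: "nat \<Rightarrow> bool \<Rightarrow> real"
  shows "(\<Sum>x\<in>bvecs m. \<Prod>i<m. f i (x i)) = (\<Prod>i<m. f i False + f i True)"
  unfolding bvecs_words by (subst sum_words_prod) (auto simp: UNIV_bool add.commute)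

lemma sum_bmats_prod:
  fixes f :: "nat \<Rightarrow> (nat \<Rightarrow> bool) \<Rightarrow> real"
  shows "(\<Sum>A\<in>bmats n k. \<Prod>i<n. f i (A i)) = (\<Prod>i<n. \<Sum>r\<in>bvecs k. f i r)"
  unfolding bmats_words by (rule sum_words_prod) simp

lemma card_bvecs: "card (bvecs m) = 2 ^ m"
proof -
  have "real (card (bvecs m)) = (\<Sum>x\<in>bvecs m. \<Prod>i<m. (\<lambda>i b. 1::real) i (x i))" by simp
  also have "\<dots> = 2 ^ m" by (subst sum_bvecs_prod) simp
  finally show ?thesis by (metis of_nat_eq_of_nat_power_cancel_iff of_nat_numeral)
qed

lemma prod_if_card:
  fixes a b :: real and n :: nat
  shows "(\<Prod>i<n. if P i then a else b) = a ^ card {i. i < n \<and> P i} * b ^ (n - card {i. i < n \<and> P i})"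
proof -
  have parts: "{..<n} = {i. i < n \<and> P i} \<union> {i. i < n \<and> \<not> P i}" by auto
  have "card {..<n} = card {i. i < n \<and> P i} + card {i. i < n \<and> \<not> P i}"
    by (subst parts, rule card_Un_disjoint) auto
  then have c: "card {i. i < n \<and> \<not> P i} = n - card {i. i < n \<and> P i}" by simp
  have "(\<Prod>i<n. if P i then a else b) = (\<Prod>i\<in>{..<n} \<inter> {i. P i}. a) * (\<Prod>i\<in>{..<n} \<inter> - {i. P i}. b)"
    by (rule prod.If_cases) simp
  also have "{..<n} \<inter> {i. P i} = {i. i < n \<and> P i}" by auto
  also have "{..<n} \<inter> - {i. P i} = {i. i < n \<and> \<not> P i}" by auto
  finally show ?thesis using c by simp
qed

lemma neg1_power_card:
  fixes k :: nat
  shows "(-1::real) ^ card {j. j < k \<and> P j} = (\<Prod>j<k. if P j then -1 else 1)"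
  using prod_if_card[of P "-1::real" 1 k] by simp

section \<open>The channel as a product of bit transitions\<close>

definition bsc_bit :: "real \<Rightarrow> bool \<Rightarrow> bool \<Rightarrow> real" where
  "bsc_bit \<epsilon> b c = (if b = c then 1 - \<epsilon> else \<epsilon>)"

definition bsc_word :: "real \<Rightarrow> nat \<Rightarrow> (nat \<Rightarrow> bool) \<Rightarrow> (nat \<Rightarrow> bool) \<Rightarrow> real" where
  "bsc_word \<epsilon> n y c = (\<Prod>i<n. bsc_bit \<epsilon> (y i) (c i))"

lemma bsc_lik_word: "bsc_lik \<epsilon> n k A x y = bsc_word \<epsilon> n y (encode n k A x)"
proof -
  have "bsc_word \<epsilon> n y (encode n k A x) = (\<Prod>i<n. if y i \<noteq> encode n k A x i then \<epsilon> else 1 - \<epsilon>)"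
    unfolding bsc_word_def bsc_bit_def by (intro prod.cong) auto
  then show ?thesis unfolding bsc_lik_def hdist_def by (simp add: prod_if_card)
qed

lemma bsc_bit_nonneg: "0 \<le> \<epsilon> \<Longrightarrow> \<epsilon> \<le> 1 \<Longrightarrow> 0 \<le> bsc_bit \<epsilon> b c"
  by (simp add: bsc_bit_def)

lemma bsc_word_nonneg: "0 \<le> \<epsilon> \<Longrightarrow> \<epsilon> \<le> 1 \<Longrightarrow> 0 \<le> bsc_word \<epsilon> n y c"
  unfolding bsc_word_def by (intro prod_nonneg bsc_bit_nonneg) auto

lemma bsc_word_pos: "0 < \<epsilon> \<Longrightarrow> \<epsilon> < 1 \<Longrightarrow> 0 < bsc_word \<epsilon> n y c"
  unfolding bsc_word_def bsc_bit_def by (intro prod_pos) auto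

lemma sum_bsc_word: "(\<Sum>y\<in>bvecs n. bsc_word \<epsilon> n y c) = 1"
  unfolding bsc_word_def by (subst sum_bvecs_prod) (simp add: bsc_bit_def; intro prod.neutral; auto)

section \<open>Parities of random rows\<close>

definition parity :: "nat \<Rightarrow> (nat \<Rightarrow> bool) \<Rightarrow> (nat \<Rightarrow> bool) \<Rightarrow> bool" where
  "parity k r z = odd (card {j. j < k \<and> r j \<and> z j})"

definition weight :: "nat \<Rightarrow> (nat \<Rightarrow> bool) \<Rightarrow> nat" where
  "weight k z = card {j. j < k \<and> z j}"

definition row_prob :: "real \<Rightarrow> nat \<Rightarrow> (nat \<Rightarrow> bool) \<Rightarrow> real" where
  "row_prob \<rho> k r = (\<Prod>j<k. if r j then \<rho> else 1 - \<rho>)"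

definition parity_prob :: "real \<Rightarrow> nat \<Rightarrow> (nat \<Rightarrow> bool) \<Rightarrow> real" where
  "parity_prob \<rho> k z = (\<Sum>r\<in>bvecs k. row_prob \<rho> k r * (if parity k r z then 1 else 0))"

lemma bsc_word_encode: "bsc_word \<epsilon> n u (encode n k A z) = (\<Prod>i<n. bsc_bit \<epsilon> (u i) (parity k (A i) z))"
  unfolding bsc_word_def by (intro prod.cong refl) (simp add: encode_def parity_def)

lemma bern_mat_rows: "bern_mat \<rho> n k A = (\<Prod>i<n. row_prob \<rho> k (A i))"
proof -
  let ?T = "{..<n} \<times> {..<k}" and ?S = "{p. A (fst p) (snd p)}"
  have ones: "{(i, j). i < n \<and> j < k \<and> A i j} = ?T \<inter> ?S" by auto
  have split: "?T = (?T \<inter> ?S) \<union> (?T \<inter> - ?S)" by blast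
  have "card ?T = card (?T \<inter> ?S) + card (?T \<inter> - ?S)"
    by (subst split, rule card_Un_disjoint) auto
  then have zeros: "card (?T \<inter> - ?S) = n * k - card (?T \<inter> ?S)"
    by (simp add: card_cartesian_product)
  have "(\<Prod>i<n. row_prob \<rho> k (A i)) = (\<Prod>p\<in>?T. if A (fst p) (snd p) then \<rho> else 1 - \<rho>)"
    unfolding row_prob_def by (simp add: prod.cartesian_product split_def)
  also have "\<dots> = (\<Prod>p\<in>?T \<inter> ?S. \<rho>) * (\<Prod>p\<in>?T \<inter> - ?S. 1 - \<rho>)"
    by (rule prod.If_cases) simp
  finally show ?thesis unfolding bern_mat_def Let_def ones using zeros by simp
qed

lemma sum_row_prob: "(\<Sum>r\<in>bvecs k. row_prob \<rho> k r) = 1"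
  unfolding row_prob_def by (subst sum_bvecs_prod) simp

lemma sum_bern_mat: "(\<Sum>A\<in>bmats n k. bern_mat \<rho> n k A) = 1"
  unfolding bern_mat_rows by (subst sum_bmats_prod) (simp add: sum_row_prob)

lemma row_prob_nonneg: "0 \<le> \<rho> \<Longrightarrow> \<rho> \<le> 1 \<Longrightarrow> 0 \<le> row_prob \<rho> k r"
  unfolding row_prob_def by (intro prod_nonneg) auto

lemma bern_mat_nonneg: "0 \<le> \<rho> \<Longrightarrow> \<rho> \<le> 1 \<Longrightarrow> 0 \<le> bern_mat \<rho> n k A"
  unfolding bern_mat_rows by (intro prod_nonneg row_prob_nonneg) auto

lemma parity_prob_bounds:
  assumes "0 \<le> \<rho>" "\<rho> \<le> 1"
  shows "0 \<le> parity_prob \<rho> k z" "parity_prob \<rho> k z \<le> 1"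
proof -
  show "0 \<le> parity_prob \<rho> k z"
    unfolding parity_prob_def using assms by (intro sum_nonneg) (auto intro: row_prob_nonneg)
  have "parity_prob \<rho> k z \<le> (\<Sum>r\<in>bvecs k. row_prob \<rho> k r)"
    unfolding parity_prob_def using assms by (intro sum_mono) (auto intro: row_prob_nonneg)
  then show "parity_prob \<rho> k z \<le> 1" by (simp add: sum_row_prob)
qed

lemma parity_prob_weight: "parity_prob \<rho> k z = (1 - (1 - 2 * \<rho>) ^ weight k z) / 2"
proof -
  let ?s = "\<lambda>r. (-1::real) ^ card {j. j < k \<and> r j \<and> z j}"
  have "(\<Sum>r\<in>bvecs k. row_prob \<rho> k r * ?s r)
      = (\<Sum>r\<in>bvecs k. \<Prod>j<k. (if r j then \<rho> else 1 - \<rho>) * (if r j \<and> z j then -1 else 1))"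
    unfolding row_prob_def neg1_power_card by (simp add: prod.distrib)
  also have "\<dots> = (\<Prod>j<k. if z j then 1 - 2 * \<rho> else 1)"
    by (subst sum_bvecs_prod) (auto intro!: prod.cong)
  also have "\<dots> = (1 - 2 * \<rho>) ^ weight k z"
    by (simp add: prod_if_card weight_def)
  finally have bias: "(\<Sum>r\<in>bvecs k. row_prob \<rho> k r * ?s r) = (1 - 2 * \<rho>) ^ weight k z" .
  have "(\<Sum>r\<in>bvecs k. row_prob \<rho> k r * ?s r)
      = (\<Sum>r\<in>bvecs k. row_prob \<rho> k r - 2 * (row_prob \<rho> k r * (if parity k r z then 1 else 0)))"
    by (intro sum.cong refl) (simp add: parity_def)
  also have "\<dots> = 1 - 2 * parity_prob \<rho> k z"
    unfolding parity_prob_def by (simp add: sum_subtractf sum_distrib_left sum_row_prob)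
  finally have "(\<Sum>r\<in>bvecs k. row_prob \<rho> k r * ?s r) = 1 - 2 * parity_prob \<rho> k z" .
  with bias show ?thesis by simp
qed

text \<open>Expectation over A of a product of functions of the row parities A_i.z:
  the rows are independent and each parity is Bernoulli(parity_prob).\<close>
lemma bern_expect_rows:
  fixes g :: "nat \<Rightarrow> bool \<Rightarrow> real"
  shows "(\<Sum>A\<in>bmats n k. bern_mat \<rho> n k A * (\<Prod>i<n. g i (parity k (A i) z)))
     = (\<Prod>i<n. (1 - parity_prob \<rho> k z) * g i False + parity_prob \<rho> k z * g i True)"
proof -
  have "(\<Sum>A\<in>bmats n k. bern_mat \<rho> n k A * (\<Prod>i<n. g i (parity k (A i) z)))
      = (\<Prod>i<n. \<Sum>r\<in>bvecs k. row_prob \<rho> k r * g i (parity k r z))"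
    unfolding bern_mat_rows prod.distrib[symmetric] by (rule sum_bmats_prod)
  also have "\<dots> = (\<Prod>i<n. (1 - parity_prob \<rho> k z) * g i False + parity_prob \<rho> k z * g i True)"
  proof (rule prod.cong[OF refl])
    fix i
    have "(\<Sum>r\<in>bvecs k. row_prob \<rho> k r * g i (parity k r z))
        = (\<Sum>r\<in>bvecs k. row_prob \<rho> k r * g i False
             + (g i True - g i False) * (row_prob \<rho> k r * (if parity k r z then 1 else 0)))"
      by (intro sum.cong) (auto simp: algebra_simps)
    also have "\<dots> = g i False + (g i True - g i False) * parity_prob \<rho> k z"
      by (simp add: sum.distrib sum_distrib_left[symmetric] sum_distrib_right[symmetric]
          sum_row_prob parity_prob_def)
    finally show "(\<Sum>r\<in>bvecs k. row_prob \<rho> k r * g i (parity k r z))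
        = (1 - parity_prob \<rho> k z) * g i False + parity_prob \<rho> k z * g i True"
      by (simp add: algebra_simps)
  qed
  finally show ?thesis .
qed


section \<open>Translation symmetry: reduction to the all-zero codeword\<close>

definition xor_vec :: "(nat \<Rightarrow> bool) \<Rightarrow> (nat \<Rightarrow> bool) \<Rightarrow> (nat \<Rightarrow> bool)" where
  "xor_vec u v = (\<lambda>i. u i \<noteq> v i)"

definition zero_vec :: "nat \<Rightarrow> bool" where
  "zero_vec = (\<lambda>_. False)"

lemma zero_vec_bvecs: "zero_vec \<in> bvecs m"
  by (simp add: zero_vec_def bvecs_def)

lemma xor_vec_bvecs: "u \<in> bvecs m \<Longrightarrow> v \<in> bvecs m \<Longrightarrow> xor_vec u v \<in> bvecs m"
  by (auto simp: bvecs_def xor_vec_def)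

lemma xor_vec_cancel_right: "xor_vec (xor_vec u v) v = u"
  by (auto simp: xor_vec_def fun_eq_iff)

lemma xor_vec_cancel_left: "xor_vec x (xor_vec x z) = z"
  by (auto simp: xor_vec_def fun_eq_iff)

lemma bij_xor_vec_right: "v \<in> bvecs m \<Longrightarrow> bij_betw (\<lambda>u. xor_vec u v) (bvecs m) (bvecs m)"
  by (rule bij_betw_byWitness[where f'="\<lambda>u. xor_vec u v"]) (auto simp: xor_vec_cancel_right xor_vec_bvecs)

lemma bij_xor_vec_left: "x \<in> bvecs m \<Longrightarrow> bij_betw (xor_vec x) (bvecs m) (bvecs m)"
  by (rule bij_betw_byWitness[where f'="xor_vec x"]) (auto simp: xor_vec_cancel_left xor_vec_bvecs)

lemma parity_xor: "parity k r (xor_vec x z) = (parity k r x \<noteq> parity k r z)"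
proof -
  have "(-1::real) ^ card {j. j < k \<and> r j \<and> xor_vec x z j}
      = (-1::real) ^ card {j. j < k \<and> r j \<and> x j} * (-1::real) ^ card {j. j < k \<and> r j \<and> z j}"
    unfolding neg1_power_card prod.distrib[symmetric] by (intro prod.cong) (auto simp: xor_vec_def)
  moreover have "(-1::real) ^ c = (if odd c then -1 else 1)" for c :: nat by simp
  ultimately show ?thesis unfolding parity_def by (auto split: if_splits)
qed

lemma encode_xor: "i < n \<Longrightarrow> encode n k A (xor_vec x z) i = (encode n k A x i \<noteq> encode n k A z i)"
  unfolding encode_def using parity_xor[of k "A i" x z] by (simp add: parity_def)

lemma encode_zero_vec: "encode n k A zero_vec = zero_vec"
  by (simp add: encode_def zero_vec_def fun_eq_iff)

lemma encode_bvecs: "encode n k A x \<in> bvecs n"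
  by (simp add: encode_def bvecs_def)

lemma bsc_word_translate:
  "bsc_word \<epsilon> n (xor_vec u (encode n k A x)) (encode n k A (xor_vec x z)) = bsc_word \<epsilon> n u (encode n k A z)"
  unfolding bsc_word_def by (intro prod.cong refl) (auto simp: encode_xor bsc_bit_def xor_vec_def[of u])

lemma bsc_word_translate_zero:
  "bsc_word \<epsilon> n (xor_vec u (encode n k A x)) (encode n k A x) = bsc_word \<epsilon> n u zero_vec"
  unfolding bsc_word_def by (intro prod.cong refl) (auto simp: xor_vec_def bsc_bit_def zero_vec_def)

text \<open>Total likelihood of the output y over all messages (2^k times its probability).\<close>
definition code_mass :: "real \<Rightarrow> nat \<Rightarrow> nat \<Rightarrow> (nat \<Rightarrow> nat \<Rightarrow> bool) \<Rightarrow> (nat \<Rightarrow> bool) \<Rightarrow> real" where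
  "code_mass \<epsilon> n k A y = (\<Sum>z\<in>bvecs k. bsc_word \<epsilon> n y (encode n k A z))"

lemma code_mass_pos: "0 < \<epsilon> \<Longrightarrow> \<epsilon> < 1 \<Longrightarrow> 0 < code_mass \<epsilon> n k A y"
  unfolding code_mass_def using zero_vec_bvecs by (intro sum_pos) (auto simp: bsc_word_pos)

lemma code_mass_translate:
  assumes x: "x \<in> bvecs k"
  shows "code_mass \<epsilon> n k A (xor_vec u (encode n k A x)) = code_mass \<epsilon> n k A u"
proof -
  have "code_mass \<epsilon> n k A (xor_vec u (encode n k A x))
      = (\<Sum>z\<in>bvecs k. bsc_word \<epsilon> n (xor_vec u (encode n k A x)) (encode n k A (xor_vec x z)))"
    unfolding code_mass_def
    using sum.reindex_bij_betw[OF bij_xor_vec_left[OF x],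
        of "\<lambda>x'. bsc_word \<epsilon> n (xor_vec u (encode n k A x)) (encode n k A x')"]
    by simp
  then show ?thesis unfolding bsc_word_translate code_mass_def .
qed

text \<open>Error probability of the posterior-sampling decoder when the zero message is sent.\<close>
definition zero_error :: "real \<Rightarrow> nat \<Rightarrow> nat \<Rightarrow> (nat \<Rightarrow> nat \<Rightarrow> bool) \<Rightarrow> real" where
  "zero_error \<epsilon> n k A = (\<Sum>u\<in>bvecs n. bsc_word \<epsilon> n u zero_vec
     * (code_mass \<epsilon> n k A u - bsc_word \<epsilon> n u zero_vec) / code_mass \<epsilon> n k A u)"

lemma message_error_eq_zero_error:
  assumes x: "x \<in> bvecs k"
  shows "(\<Sum>y\<in>bvecs n. bsc_word \<epsilon> n y (encode n k A x)
           * (code_mass \<epsilon> n k A y - bsc_word \<epsilon> n y (encode n k A x)) / code_mass \<epsilon> n k A y)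
       = zero_error \<epsilon> n k A"
proof -
  let ?c = "encode n k A x" and ?O = "code_mass \<epsilon> n k A"
  have "(\<Sum>y\<in>bvecs n. bsc_word \<epsilon> n y ?c * (?O y - bsc_word \<epsilon> n y ?c) / ?O y)
      = (\<Sum>u\<in>bvecs n. bsc_word \<epsilon> n (xor_vec u ?c) ?c
           * (?O (xor_vec u ?c) - bsc_word \<epsilon> n (xor_vec u ?c) ?c) / ?O (xor_vec u ?c))"
    using sum.reindex_bij_betw[OF bij_xor_vec_right[OF encode_bvecs[of n k A x]],
        of "\<lambda>y. bsc_word \<epsilon> n y ?c * (?O y - bsc_word \<epsilon> n y ?c) / ?O y"] by simp
  then show ?thesis unfolding zero_error_def bsc_word_translate_zero code_mass_translate[OF x] .
qed

lemma one_minus_pc: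
  assumes "0 < \<epsilon>" "\<epsilon> < 1"
  shows "1 - p_c \<epsilon> n k A = zero_error \<epsilon> n k A"
proof -
  let ?W = "\<lambda>x y. bsc_word \<epsilon> n y (encode n k A x)" and ?O = "code_mass \<epsilon> n k A"
  have joint: "joint \<epsilon> n k A x y = ?W x y / 2 ^ k" for x y
    by (simp add: joint_def bsc_lik_word)
  have out: "out_prob \<epsilon> n k A y = ?O y / 2 ^ k" for y
    by (simp add: out_prob_def joint code_mass_def sum_divide_distrib)
  have one: "1 = (\<Sum>x\<in>bvecs k. \<Sum>y\<in>bvecs n. ?W x y / 2 ^ k)"
    by (simp add: sum_divide_distrib[symmetric] sum_bsc_word card_bvecs)
  have O_nz: "?O y \<noteq> 0" for y
    using code_mass_pos[OF assms] by (metis less_irrefl)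
  have "1 - p_c \<epsilon> n k A = (\<Sum>x\<in>bvecs k. \<Sum>y\<in>bvecs n. ?W x y / 2 ^ k - ?W x y / 2 ^ k * (?W x y / ?O y))"
    unfolding p_c_def posterior_def joint out by (subst one) (simp add: sum_subtractf)
  also have "\<dots> = (\<Sum>x\<in>bvecs k. (\<Sum>y\<in>bvecs n. ?W x y * (?O y - ?W x y) / ?O y) / 2 ^ k)"
    unfolding sum_divide_distrib using O_nz by (intro sum.cong refl) (simp add: field_simps)
  also have "\<dots> = (\<Sum>x\<in>bvecs k. zero_error \<epsilon> n k A / 2 ^ k)"
    by (intro sum.cong refl) (simp add: message_error_eq_zero_error)
  also have "\<dots> = zero_error \<epsilon> n k A" by (simp add: card_bvecs)
  finally show ?thesis .
qed

lemma zero_error_nonneg: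
  assumes "0 < \<epsilon>" "\<epsilon> < 1"
  shows "0 \<le> zero_error \<epsilon> n k A"
  unfolding zero_error_def
proof (rule sum_nonneg)
  fix u
  have "bsc_word \<epsilon> n u zero_vec \<le> code_mass \<epsilon> n k A u"
    unfolding code_mass_def using zero_vec_bvecs[of k] assms
    by (subst encode_zero_vec[symmetric, of n k A])
      (rule member_le_sum, auto intro: less_imp_le[OF bsc_word_pos])
  then show "0 \<le> bsc_word \<epsilon> n u zero_vec * (code_mass \<epsilon> n k A u - bsc_word \<epsilon> n u zero_vec) / code_mass \<epsilon> n k A u"
    using bsc_word_pos[OF assms] code_mass_pos[OF assms]
    by (intro divide_nonneg_pos mult_nonneg_nonneg) (auto intro: less_imp_le)
qed

lemma one_minus_expected_pc:
  assumes "0 < \<epsilon>" "\<epsilon> < 1"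
  shows "1 - expected_pc \<rho> \<epsilon> n k = (\<Sum>A\<in>bmats n k. bern_mat \<rho> n k A * zero_error \<epsilon> n k A)"
proof -
  have "1 - expected_pc \<rho> \<epsilon> n k = (\<Sum>A\<in>bmats n k. bern_mat \<rho> n k A * (1 - p_c \<epsilon> n k A))"
    unfolding expected_pc_def by (simp add: sum_bern_mat algebra_simps sum_subtractf)
  then show ?thesis using one_minus_pc[OF assms] by simp
qed

lemma expected_pc_le_1:
  assumes "0 < \<epsilon>" "\<epsilon> < 1" "0 \<le> \<rho>" "\<rho> \<le> 1"
  shows "expected_pc \<rho> \<epsilon> n k \<le> 1"
proof -
  have "0 \<le> (\<Sum>A\<in>bmats n k. bern_mat \<rho> n k A * zero_error \<epsilon> n k A)"
    using assms zero_error_nonneg by (intro sum_nonneg mult_nonneg_nonneg bern_mat_nonneg) auto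
  then show ?thesis using one_minus_expected_pc[OF assms(1,2), of \<rho> n k] by linarith
qed


section \<open>Elementary inequalities\<close>

text \<open>For L > 0 and b \<ge> 0, the ratio L b / (L + b) is at most L^(1-l) b^l for every
  l in [0, 1] (it is below both L and b).\<close>
lemma ratio_le_powr_interpolation:
  fixes L b l :: real
  assumes L: "0 < L" and b: "0 \<le> b" and l: "0 \<le> l" "l \<le> 1"
  shows "L * b / (L + b) \<le> L powr (1 - l) * b powr l"
proof (cases "b = 0")
  case True then show ?thesis by simp
next
  case False
  with b have bp: "0 < b" by simp
  have eq: "L powr (1 - l) * b powr l = L * (b / L) powr l"
    using L bp by (simp add: powr_divide powr_diff field_simps)
  have "b / (L + b) \<le> (b / L) powr l"
  proof (cases "b \<le> L")
    case True
    have "b / (L + b) \<le> b / L" using L bp by (intro divide_left_mono) auto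
    also have "\<dots> = (b / L) powr 1" using L bp by simp
    also have "\<dots> \<le> (b / L) powr l" using True L bp l by (intro powr_mono') auto
    finally show ?thesis .
  next
    case False
    have "b / (L + b) \<le> 1" using L bp by simp
    also have "1 \<le> (b / L) powr l" using False L bp l by (intro ge_one_powr_ge_zero) auto
    finally show ?thesis .
  qed
  then have "L * (b / (L + b)) \<le> L * (b / L) powr l" using L by (intro mult_left_mono) auto
  then show ?thesis using eq by simp
qed

text \<open>Splitting the competitors into two groups a and b: the first is controlled by a
  Bhattacharyya (square-root) bound, the second by a Gallager (l-power) bound.\<close>
lemma error_ratio_split:
  fixes L a b l :: real
  assumes L: "0 < L" and a: "0 \<le> a" and b: "0 \<le> b" and l: "0 \<le> l" "l \<le> 1"
  shows "L * ((L + a + b) - L) / (L + a + b) \<le> sqrt L * sqrt a + L powr (1 - l) * b powr l"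
proof -
  have "L * ((L + a + b) - L) / (L + a + b) = L * a / (L + a + b) + L * b / (L + a + b)"
    by (simp add: add_divide_distrib[symmetric] distrib_left)
  also have "\<dots> \<le> L * a / (L + a) + L * b / (L + b)"
  proof (rule add_mono)
    show "L * a / (L + a + b) \<le> L * a / (L + a)" by (rule divide_left_mono) (use L a b in auto)
    show "L * b / (L + a + b) \<le> L * b / (L + b)" by (rule divide_left_mono) (use L a b in auto)
  qed
  also have "L * a / (L + a) \<le> L powr (1 - 1/2) * a powr (1/2)"
    using L a by (intro ratio_le_powr_interpolation) auto
  also have "L powr (1 - 1/2) * a powr (1/2) = sqrt L * sqrt a"
    using L a by (simp add: powr_half_sqrt)
  also have "L * b / (L + b) \<le> L powr (1 - l) * b powr l"
    using L b l by (intro ratio_le_powr_interpolation) auto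
  finally show ?thesis by simp
qed

lemma sqrt_sum_le_sum_sqrt:
  assumes "finite S" "\<And>z. z \<in> S \<Longrightarrow> 0 \<le> f z"
  shows "sqrt (\<Sum>z\<in>S. f z) \<le> (\<Sum>z\<in>S. sqrt (f z))"
  using assms
proof (induction S rule: finite_induct)
  case empty then show ?case by simp
next
  case (insert x F)
  have "sqrt (\<Sum>z\<in>insert x F. f z) = sqrt (f x + (\<Sum>z\<in>F. f z))" using insert by simp
  also have "\<dots> \<le> sqrt (f x) + sqrt (\<Sum>z\<in>F. f z)"
    using insert by (intro sqrt_add_le_add_sqrt) (auto intro: sum_nonneg)
  also have "\<dots> \<le> sqrt (f x) + (\<Sum>z\<in>F. sqrt (f z))" using insert by auto
  finally show ?case using insert by simp
qed

lemma sqrt_prod: "sqrt (prod f I) = (\<Prod>i\<in>I. sqrt (f i))"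
  by (induction I rule: infinite_finite_induct) (auto simp: real_sqrt_mult)

lemma jensen_powr:
  fixes p X :: "'a \<Rightarrow> real"
  assumes I: "finite I" and p: "\<And>i. i \<in> I \<Longrightarrow> 0 \<le> p i" and ps: "(\<Sum>i\<in>I. p i) = 1"
    and X: "\<And>i. i \<in> I \<Longrightarrow> 0 \<le> X i" and l: "0 < l" "l < 1"
  shows "(\<Sum>i\<in>I. p i * X i powr l) \<le> (\<Sum>i\<in>I. p i * X i) powr l"
proof -
  define m where "m = (\<Sum>i\<in>I. p i * X i)"
  have m0: "0 \<le> m" unfolding m_def using p X by (intro sum_nonneg) auto
  show ?thesis
  proof (cases "m = 0")
    case True
    have "p i * X i = 0" if "i \<in> I" for i
      using sum_nonneg_eq_0_iff[of I "\<lambda>i. p i * X i"] True I p X that unfolding m_def by auto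
    then have "p i * X i powr l = 0" if "i \<in> I" for i
      using that by (cases "X i = 0") auto
    then have "(\<Sum>i\<in>I. p i * X i powr l) = 0" by (intro sum.neutral) auto
    then show ?thesis by simp
  next
    case False
    with m0 have mp: "0 < m" by simp
    text \<open>Tangent-line bound at m, from Young's inequality.\<close>
    have tangent: "X i powr l \<le> m powr l * (l * (X i / m) + (1 - l))" if i: "i \<in> I" for i
    proof (cases "X i = 0")
      case True then show ?thesis using l mp by simp
    next
      case False
      with X[OF i] have xp: "0 < X i" by simp
      have "(X i / m) powr l * 1 powr (1 - l) \<le> l * (X i / m) + (1 - l) * 1"
        using l xp mp by (intro Youngs_inequality_0) auto
      then have "m powr l * (X i / m) powr l \<le> m powr l * (l * (X i / m) + (1 - l))"
        by (intro mult_left_mono) auto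
      moreover have "m powr l * (X i / m) powr l = X i powr l"
        using mp xp by (simp add: powr_divide)
      ultimately show ?thesis by simp
    qed
    have "(\<Sum>i\<in>I. p i * X i powr l) \<le> (\<Sum>i\<in>I. p i * (m powr l * (l * (X i / m) + (1 - l))))"
      using tangent p by (intro sum_mono mult_left_mono) auto
    also have "\<dots> = (\<Sum>i\<in>I. (m powr l * (l / m)) * (p i * X i) + (m powr l * (1 - l)) * p i)"
      by (intro sum.cong refl) (simp add: algebra_simps)
    also have "\<dots> = m powr l * (l / m * (\<Sum>i\<in>I. p i * X i) + (1 - l) * (\<Sum>i\<in>I. p i))"
      by (simp only: sum.distrib sum_distrib_left[symmetric] distrib_left mult.assoc)
    also have "\<dots> = m powr l"
      using mp ps unfolding m_def[symmetric] by simp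
    finally show ?thesis unfolding m_def .
  qed
qed

section \<open>Splitting the competing messages by weight\<close>

definition light :: "nat \<Rightarrow> nat \<Rightarrow> (nat \<Rightarrow> bool) set" where
  "light k W = {z \<in> bvecs k. 0 < weight k z \<and> weight k z < W}"

definition heavy :: "nat \<Rightarrow> nat \<Rightarrow> (nat \<Rightarrow> bool) set" where
  "heavy k W = {z \<in> bvecs k. W \<le> weight k z}"

lemma finite_light[simp]: "finite (light k W)"
  by (simp add: light_def)

lemma finite_heavy[simp]: "finite (heavy k W)"
  by (simp add: heavy_def)

lemma weight_eq_0_iff: "z \<in> bvecs k \<Longrightarrow> weight k z = 0 \<longleftrightarrow> z = zero_vec"
  by (auto simp: weight_def bvecs_def zero_vec_def fun_eq_iff) (metis not_le)

lemma weight_zero_vec: "weight k zero_vec = 0"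
  by (simp add: weight_def zero_vec_def)

lemma bvecs_partition:
  assumes "1 \<le> W"
  shows "bvecs k = insert zero_vec (light k W \<union> heavy k W)"
    and "zero_vec \<notin> light k W \<union> heavy k W" and "light k W \<inter> heavy k W = {}"
  using assms weight_eq_0_iff[of _ k] zero_vec_bvecs[of k] by (auto simp: light_def heavy_def weight_zero_vec)

lemma code_mass_partition:
  assumes "1 \<le> W"
  shows "code_mass \<epsilon> n k A u = bsc_word \<epsilon> n u zero_vec
     + (\<Sum>z\<in>light k W. bsc_word \<epsilon> n u (encode n k A z)) + (\<Sum>z\<in>heavy k W. bsc_word \<epsilon> n u (encode n k A z))"
proof -
  let ?f = "\<lambda>z. bsc_word \<epsilon> n u (encode n k A z)"
  have "sum ?f (insert zero_vec (light k W \<union> heavy k W)) = ?f zero_vec + sum ?f (light k W \<union> heavy k W)"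
    by (rule sum.insert) (use bvecs_partition(2)[OF assms] in auto)
  also have "sum ?f (light k W \<union> heavy k W) = sum ?f (light k W) + sum ?f (heavy k W)"
    by (rule sum.union_disjoint) (use bvecs_partition(3)[OF assms] in auto)
  finally show ?thesis
    unfolding code_mass_def using bvecs_partition(1)[OF assms] by (simp add: encode_zero_vec add.assoc)
qed

lemma card_light: "real (card (light k W)) \<le> real W * (real k + 1) ^ W"
proof -
  let ?supp = "\<lambda>z. {j. j < k \<and> z j}"
  have inj: "inj_on ?supp (light k W)"
  proof (rule inj_onI)
    fix x y assume xy: "x \<in> light k W" "y \<in> light k W" "?supp x = ?supp y"
    show "x = y"
    proof
      fix j show "x j = y j"
        using xy by (cases "j < k") (auto simp: light_def bvecs_def)
    qed
  qed
  have sub: "?supp ` light k W \<subseteq> (\<Union>j\<in>{..<W}. {S. S \<subseteq> {..<k} \<and> card S = j})"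
    by (auto simp: light_def weight_def)
  have "card (light k W) = card (?supp ` light k W)" using card_image[OF inj] by simp
  also have "\<dots> \<le> card (\<Union>j\<in>{..<W}. {S. S \<subseteq> {..<k} \<and> card S = j})"
    by (rule card_mono[OF _ sub]) auto
  also have "\<dots> \<le> (\<Sum>j\<in>{..<W}. card {S. S \<subseteq> {..<k} \<and> card S = j})"
    by (rule card_UN_le) simp
  also have "\<dots> = (\<Sum>j\<in>{..<W}. k choose j)"
    by (intro sum.cong refl) (simp add: n_subsets)
  finally have "real (card (light k W)) \<le> (\<Sum>j\<in>{..<W}. real (k choose j))"
    by (metis of_nat_le_iff of_nat_sum)
  also have "\<dots> \<le> (\<Sum>j\<in>{..<W}. (real k + 1) ^ W)"
  proof (rule sum_mono)
    fix j assume j: "j \<in> {..<W}"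
    have "real (k choose j) \<le> (real k + 1) ^ j"
    proof (cases "j \<le> k")
      case True
      have "real (k choose j) \<le> real k ^ j"
        using binomial_le_pow[OF True] by (metis of_nat_le_iff of_nat_power)
      then show ?thesis by (smt (verit) of_nat_0_le_iff power_mono)
    qed (simp add: binomial_eq_0)
    also have "\<dots> \<le> (real k + 1) ^ W" using j by (intro power_increasing) auto
    finally show "real (k choose j) \<le> (real k + 1) ^ W" .
  qed
  also have "\<dots> = real W * (real k + 1) ^ W" by simp
  finally show ?thesis .
qed

text \<open>The contributions of light and heavy competitors to the zero-codeword error,
  in Bhattacharyya and in Gallager form respectively.\<close>
definition light_term :: "real \<Rightarrow> nat \<Rightarrow> nat \<Rightarrow> nat \<Rightarrow> (nat \<Rightarrow> nat \<Rightarrow> bool) \<Rightarrow> real" where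
  "light_term \<epsilon> n k W A = (\<Sum>u\<in>bvecs n. sqrt (bsc_word \<epsilon> n u zero_vec)
     * (\<Sum>z\<in>light k W. sqrt (bsc_word \<epsilon> n u (encode n k A z))))"

definition heavy_term :: "real \<Rightarrow> nat \<Rightarrow> nat \<Rightarrow> nat \<Rightarrow> real \<Rightarrow> (nat \<Rightarrow> nat \<Rightarrow> bool) \<Rightarrow> real" where
  "heavy_term \<epsilon> n k W l A = (\<Sum>u\<in>bvecs n. bsc_word \<epsilon> n u zero_vec powr (1 - l)
     * (\<Sum>z\<in>heavy k W. bsc_word \<epsilon> n u (encode n k A z)) powr l)"

lemma zero_error_le_split:
  assumes "0 < \<epsilon>" "\<epsilon> < 1" "1 \<le> W" "0 \<le> l" "l \<le> 1"
  shows "zero_error \<epsilon> n k A \<le> light_term \<epsilon> n k W A + heavy_term \<epsilon> n k W l A"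
  unfolding zero_error_def light_term_def heavy_term_def sum.distrib[symmetric]
proof (rule sum_mono)
  fix u
  let ?L = "bsc_word \<epsilon> n u zero_vec"
  let ?a = "\<Sum>z\<in>light k W. bsc_word \<epsilon> n u (encode n k A z)"
  let ?b = "\<Sum>z\<in>heavy k W. bsc_word \<epsilon> n u (encode n k A z)"
  have pos: "0 < ?L" "0 \<le> ?a" "0 \<le> ?b"
    using assms by (auto simp: bsc_word_pos intro!: sum_nonneg less_imp_le[OF bsc_word_pos])
  have "?L * (code_mass \<epsilon> n k A u - ?L) / code_mass \<epsilon> n k A u = ?L * ((?L + ?a + ?b) - ?L) / (?L + ?a + ?b)"
    by (simp add: code_mass_partition[OF assms(3)])
  also have "\<dots> \<le> sqrt ?L * sqrt ?a + ?L powr (1 - l) * ?b powr l"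
    using pos assms by (intro error_ratio_split) auto
  also have "sqrt ?L * sqrt ?a \<le> sqrt ?L * (\<Sum>z\<in>light k W. sqrt (bsc_word \<epsilon> n u (encode n k A z)))"
    using assms by (intro mult_left_mono sqrt_sum_le_sum_sqrt) (auto intro: less_imp_le[OF bsc_word_pos])
  finally show "?L * (code_mass \<epsilon> n k A u - ?L) / code_mass \<epsilon> n k A u
     \<le> sqrt ?L * (\<Sum>z\<in>light k W. sqrt (bsc_word \<epsilon> n u (encode n k A z))) + ?L powr (1 - l) * ?b powr l"
    by simp
qed


section \<open>Averages over the random generator matrix\<close>

definition bhattacharyya :: "real \<Rightarrow> real" where
  "bhattacharyya \<epsilon> = 2 * sqrt (\<epsilon> * (1 - \<epsilon>))"

lemma bhattacharyya_nonneg: "0 \<le> \<epsilon> \<Longrightarrow> \<epsilon> \<le> 1 \<Longrightarrow> 0 \<le> bhattacharyya \<epsilon>"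
  by (simp add: bhattacharyya_def)

lemma bhattacharyya_less_1:
  assumes "\<epsilon> \<noteq> 1/2"
  shows "bhattacharyya \<epsilon> < 1"
proof -
  have "\<epsilon> - 1/2 \<noteq> 0" using assms by simp
  then have "0 < (\<epsilon> - 1/2) * (\<epsilon> - 1/2)" by (simp add: order_less_le)
  moreover have "\<epsilon> * (1 - \<epsilon>) = (1/2)^2 - (\<epsilon> - 1/2) * (\<epsilon> - 1/2)"
    by (simp add: algebra_simps power2_eq_square)
  ultimately have "sqrt (\<epsilon> * (1 - \<epsilon>)) < sqrt ((1/2)^2)"
    by (intro real_sqrt_less_mono) linarith
  then show ?thesis unfolding bhattacharyya_def by simp
qed

lemma bhattacharyya_le_1: "bhattacharyya \<epsilon> \<le> 1"
proof -
  have "\<epsilon> * (1 - \<epsilon>) \<le> (1/2)^2"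
    using zero_le_square[of "\<epsilon> - 1/2"] by (simp add: algebra_simps power2_eq_square)
  then have "sqrt (\<epsilon> * (1 - \<epsilon>)) \<le> sqrt ((1/2)^2)" by (rule real_sqrt_le_mono)
  then show ?thesis unfolding bhattacharyya_def by simp
qed

lemma bhattacharyya_bit:
  assumes "0 \<le> \<epsilon>" "\<epsilon> \<le> 1"
  shows "sqrt (bsc_bit \<epsilon> False False) * ((1 - q) * sqrt (bsc_bit \<epsilon> False False) + q * sqrt (bsc_bit \<epsilon> False True))
       + sqrt (bsc_bit \<epsilon> True False) * ((1 - q) * sqrt (bsc_bit \<epsilon> True False) + q * sqrt (bsc_bit \<epsilon> True True))
       = 1 - q * (1 - bhattacharyya \<epsilon>)"
proof -
  have "sqrt \<epsilon> * sqrt \<epsilon> = \<epsilon>" "sqrt (1 - \<epsilon>) * sqrt (1 - \<epsilon>) = 1 - \<epsilon>" using assms by auto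
  then show ?thesis
    unfolding bsc_bit_def bhattacharyya_def real_sqrt_mult by (simp add: algebra_simps)
qed

lemma bhattacharyya_expect:
  assumes "0 \<le> \<epsilon>" "\<epsilon> \<le> 1"
  shows "(\<Sum>A\<in>bmats n k. bern_mat \<rho> n k A
           * (\<Sum>u\<in>bvecs n. sqrt (bsc_word \<epsilon> n u zero_vec) * sqrt (bsc_word \<epsilon> n u (encode n k A z))))
       = (1 - parity_prob \<rho> k z * (1 - bhattacharyya \<epsilon>)) ^ n"
proof -
  let ?q = "parity_prob \<rho> k z" and ?s = "\<lambda>b c. sqrt (bsc_bit \<epsilon> b c)"
  have "(\<Sum>A\<in>bmats n k. bern_mat \<rho> n k A
           * (\<Sum>u\<in>bvecs n. sqrt (bsc_word \<epsilon> n u zero_vec) * sqrt (bsc_word \<epsilon> n u (encode n k A z))))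
      = (\<Sum>u\<in>bvecs n. sqrt (bsc_word \<epsilon> n u zero_vec)
           * (\<Sum>A\<in>bmats n k. bern_mat \<rho> n k A * (\<Prod>i<n. ?s (u i) (parity k (A i) z))))"
    unfolding bsc_word_encode sqrt_prod
    by (simp add: sum_distrib_left sum_distrib_right algebra_simps sum.swap[of _ "bmats n k"])
  also have "\<dots> = (\<Sum>u\<in>bvecs n. \<Prod>i<n. ?s (u i) False * ((1 - ?q) * ?s (u i) False + ?q * ?s (u i) True))"
  proof (rule sum.cong[OF refl])
    fix u
    show "sqrt (bsc_word \<epsilon> n u zero_vec) * (\<Sum>A\<in>bmats n k. bern_mat \<rho> n k A * (\<Prod>i<n. ?s (u i) (parity k (A i) z)))
      = (\<Prod>i<n. ?s (u i) False * ((1 - ?q) * ?s (u i) False + ?q * ?s (u i) True))"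
      using bern_expect_rows[of \<rho> n k "\<lambda>i c. ?s (u i) c" z]
      by (simp add: bsc_word_def sqrt_prod zero_vec_def prod.distrib)
  qed
  also have "\<dots> = (\<Prod>i<n. 1 - ?q * (1 - bhattacharyya \<epsilon>))"
    by (subst sum_bvecs_prod) (simp add: bhattacharyya_bit[OF assms])
  finally show ?thesis by simp
qed

lemma light_term_average:
  assumes e: "0 \<le> \<epsilon>" "\<epsilon> \<le> 1" and r: "0 \<le> \<rho>" "\<rho> \<le> 1"
    and q: "\<And>z. z \<in> light k W \<Longrightarrow> q \<le> parity_prob \<rho> k z"
  shows "(\<Sum>A\<in>bmats n k. bern_mat \<rho> n k A * light_term \<epsilon> n k W A)
       \<le> real (card (light k W)) * (1 - q * (1 - bhattacharyya \<epsilon>)) ^ n"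
proof -
  have B: "0 \<le> 1 - bhattacharyya \<epsilon>" "1 - bhattacharyya \<epsilon> \<le> 1"
    using bhattacharyya_le_1 bhattacharyya_nonneg[OF e] by auto
  have "(\<Sum>A\<in>bmats n k. bern_mat \<rho> n k A * light_term \<epsilon> n k W A)
      = (\<Sum>z\<in>light k W. \<Sum>A\<in>bmats n k. bern_mat \<rho> n k A
           * (\<Sum>u\<in>bvecs n. sqrt (bsc_word \<epsilon> n u zero_vec) * sqrt (bsc_word \<epsilon> n u (encode n k A z))))"
  proof -
    have "light_term \<epsilon> n k W A = (\<Sum>z\<in>light k W. \<Sum>u\<in>bvecs n.
        sqrt (bsc_word \<epsilon> n u zero_vec) * sqrt (bsc_word \<epsilon> n u (encode n k A z)))" for A
      unfolding light_term_def sum_distrib_left by (rule sum.swap)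
    then show ?thesis by (simp only: sum_distrib_left) (rule sum.swap)
  qed
  also have "\<dots> = (\<Sum>z\<in>light k W. (1 - parity_prob \<rho> k z * (1 - bhattacharyya \<epsilon>)) ^ n)"
    using e by (simp add: bhattacharyya_expect)
  also have "\<dots> \<le> (\<Sum>z\<in>light k W. (1 - q * (1 - bhattacharyya \<epsilon>)) ^ n)"
  proof (rule sum_mono)
    fix z assume z: "z \<in> light k W"
    have "parity_prob \<rho> k z * (1 - bhattacharyya \<epsilon>) \<le> 1 * 1"
      using B parity_prob_bounds[OF r] by (intro mult_mono) auto
    moreover have "q * (1 - bhattacharyya \<epsilon>) \<le> parity_prob \<rho> k z * (1 - bhattacharyya \<epsilon>)"
      using q[OF z] B by (intro mult_right_mono) auto
    ultimately show "(1 - parity_prob \<rho> k z * (1 - bhattacharyya \<epsilon>)) ^ n \<le> (1 - q * (1 - bhattacharyya \<epsilon>)) ^ n"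
      by (intro power_mono) auto
  qed
  finally show ?thesis by simp
qed

text \<open>Gallager's channel factor sum_y W(y|0)^(1-l) for one bit.\<close>
definition gallager_factor :: "real \<Rightarrow> real \<Rightarrow> real" where
  "gallager_factor \<epsilon> l = (1 - \<epsilon>) powr (1 - l) + \<epsilon> powr (1 - l)"

lemma sum_bsc_word_powr: "(\<Sum>u\<in>bvecs n. bsc_word \<epsilon> n u zero_vec powr (1 - l)) = gallager_factor \<epsilon> l ^ n"
proof -
  have "(\<Sum>u\<in>bvecs n. bsc_word \<epsilon> n u zero_vec powr (1 - l))
      = (\<Sum>u\<in>bvecs n. \<Prod>i<n. bsc_bit \<epsilon> (u i) False powr (1 - l))"
    unfolding bsc_word_def prod_powr_distrib zero_vec_def ..
  then show ?thesis by (subst (asm) sum_bvecs_prod) (simp add: bsc_bit_def gallager_factor_def)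
qed

lemma mixed_bsc_bit_le:
  fixes q \<epsilon> \<eta> :: real
  assumes "0 \<le> \<epsilon>" "\<epsilon> \<le> 1" "\<bar>q - 1/2\<bar> \<le> \<eta>"
  shows "(1 - q) * bsc_bit \<epsilon> b False + q * bsc_bit \<epsilon> b True \<le> 1/2 + \<eta>"
proof -
  have "\<bar>1/2 - q\<bar> * \<bar>1 - 2 * \<epsilon>\<bar> \<le> \<bar>1/2 - q\<bar> * 1"
    using assms by (intro mult_left_mono) auto
  then have dev: "\<bar>(1/2 - q) * (1 - 2 * \<epsilon>)\<bar> \<le> \<eta>"
    using assms(3) by (simp add: abs_mult abs_minus_commute)
  have "(1 - q) * (1 - \<epsilon>) + q * \<epsilon> = 1/2 + (1/2 - q) * (1 - 2 * \<epsilon>)"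
    and "(1 - q) * \<epsilon> + q * (1 - \<epsilon>) = 1/2 - (1/2 - q) * (1 - 2 * \<epsilon>)"
    by (simp_all add: algebra_simps)
  with dev show ?thesis by (cases b) (auto simp: bsc_bit_def abs_le_iff)
qed

lemma mixed_bsc_bit_nonneg:
  fixes q \<epsilon> :: real
  assumes "0 \<le> \<epsilon>" "\<epsilon> \<le> 1" "0 \<le> q" "q \<le> 1"
  shows "0 \<le> (1 - q) * bsc_bit \<epsilon> b False + q * bsc_bit \<epsilon> b True"
  using assms by (intro add_nonneg_nonneg mult_nonneg_nonneg bsc_bit_nonneg) auto

lemma heavy_mass_average:
  assumes e: "0 \<le> \<epsilon>" "\<epsilon> \<le> 1" and r: "0 \<le> \<rho>" "\<rho> \<le> 1" and eta0: "0 \<le> 1/2 + \<eta>"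
    and eta: "\<And>z. z \<in> heavy k W \<Longrightarrow> \<bar>parity_prob \<rho> k z - 1/2\<bar> \<le> \<eta>"
  shows "(\<Sum>A\<in>bmats n k. bern_mat \<rho> n k A * (\<Sum>z\<in>heavy k W. bsc_word \<epsilon> n u (encode n k A z)))
       \<le> 2 ^ k * (1/2 + \<eta>) ^ n"
proof -
  let ?mix = "\<lambda>z i. (1 - parity_prob \<rho> k z) * bsc_bit \<epsilon> (u i) False + parity_prob \<rho> k z * bsc_bit \<epsilon> (u i) True"
  have "(\<Sum>A\<in>bmats n k. bern_mat \<rho> n k A * (\<Sum>z\<in>heavy k W. bsc_word \<epsilon> n u (encode n k A z)))
      = (\<Sum>z\<in>heavy k W. \<Sum>A\<in>bmats n k. bern_mat \<rho> n k A * bsc_word \<epsilon> n u (encode n k A z))"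
    by (simp add: sum_distrib_left sum.swap[of _ "bmats n k"])
  also have "\<dots> = (\<Sum>z\<in>heavy k W. \<Prod>i<n. ?mix z i)"
    unfolding bsc_word_encode
    using bern_expect_rows[of \<rho> n k "\<lambda>i c. bsc_bit \<epsilon> (u i) c"] by simp
  also have "\<dots> \<le> (\<Sum>z\<in>heavy k W. \<Prod>i<n. 1/2 + \<eta>)"
    using e eta parity_prob_bounds[OF r]
    by (intro sum_mono prod_mono conjI mixed_bsc_bit_nonneg mixed_bsc_bit_le) auto
  also have "\<dots> \<le> 2 ^ k * (1/2 + \<eta>) ^ n"
  proof -
    have "card (heavy k W) \<le> card (bvecs k)" by (rule card_mono) (auto simp: heavy_def)
    then have "real (card (heavy k W)) \<le> 2 ^ k" by (simp add: card_bvecs)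
    then show ?thesis using eta0 by (simp add: mult_right_mono)
  qed
  finally show ?thesis .
qed

text \<open>Heavy competitors (Gallager's bound): Jensen moves the l-th power outside the
  expectation over A.\<close>
lemma heavy_term_average:
  assumes e: "0 \<le> \<epsilon>" "\<epsilon> \<le> 1" and r: "0 \<le> \<rho>" "\<rho> \<le> 1" and l: "0 < l" "l < 1"
    and eta0: "0 \<le> 1/2 + \<eta>" and eta: "\<And>z. z \<in> heavy k W \<Longrightarrow> \<bar>parity_prob \<rho> k z - 1/2\<bar> \<le> \<eta>"
  shows "(\<Sum>A\<in>bmats n k. bern_mat \<rho> n k A * heavy_term \<epsilon> n k W l A)
       \<le> gallager_factor \<epsilon> l ^ n * (2 ^ k * (1/2 + \<eta>) ^ n) powr l"
proof -
  let ?S = "\<lambda>A u. \<Sum>z\<in>heavy k W. bsc_word \<epsilon> n u (encode n k A z)"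
  have S_nonneg: "0 \<le> ?S A u" for A u using e by (intro sum_nonneg bsc_word_nonneg) auto
  have "(\<Sum>A\<in>bmats n k. bern_mat \<rho> n k A * heavy_term \<epsilon> n k W l A)
      = (\<Sum>u\<in>bvecs n. bsc_word \<epsilon> n u zero_vec powr (1 - l) * (\<Sum>A\<in>bmats n k. bern_mat \<rho> n k A * ?S A u powr l))"
    unfolding heavy_term_def by (simp add: sum_distrib_left algebra_simps sum.swap[of _ "bmats n k"])
  also have "\<dots> \<le> (\<Sum>u\<in>bvecs n. bsc_word \<epsilon> n u zero_vec powr (1 - l) * (2 ^ k * (1/2 + \<eta>) ^ n) powr l)"
  proof (intro sum_mono mult_left_mono)
    fix u
    have "(\<Sum>A\<in>bmats n k. bern_mat \<rho> n k A * ?S A u powr l) \<le> (\<Sum>A\<in>bmats n k. bern_mat \<rho> n k A * ?S A u) powr l"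
      using r l S_nonneg by (intro jensen_powr) (auto simp: sum_bern_mat bern_mat_nonneg)
    also have "\<dots> \<le> (2 ^ k * (1/2 + \<eta>) ^ n) powr l"
      using heavy_mass_average[OF e r eta0 eta] S_nonneg e r l
      by (intro powr_mono2 sum_nonneg mult_nonneg_nonneg bern_mat_nonneg) (auto intro: bsc_word_nonneg)
    finally show "(\<Sum>A\<in>bmats n k. bern_mat \<rho> n k A * ?S A u powr l) \<le> (2 ^ k * (1/2 + \<eta>) ^ n) powr l" .
  qed simp
  also have "\<dots> = gallager_factor \<epsilon> l ^ n * (2 ^ k * (1/2 + \<eta>) ^ n) powr l"
    by (simp add: sum_distrib_right[symmetric] sum_bsc_word_powr)
  finally show ?thesis .
qed

lemma expected_error_le:
  assumes e: "0 < \<epsilon>" "\<epsilon> < 1" and r: "0 \<le> \<rho>" "\<rho> \<le> 1" and W: "1 \<le> W" and l: "0 < l" "l < 1"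
    and eta0: "0 \<le> 1/2 + \<eta>" and eta: "\<And>z. z \<in> heavy k W \<Longrightarrow> \<bar>parity_prob \<rho> k z - 1/2\<bar> \<le> \<eta>"
    and q: "\<And>z. z \<in> light k W \<Longrightarrow> q \<le> parity_prob \<rho> k z"
  shows "1 - expected_pc \<rho> \<epsilon> n k \<le> real (card (light k W)) * (1 - q * (1 - bhattacharyya \<epsilon>)) ^ n
     + gallager_factor \<epsilon> l ^ n * (2 ^ k * (1/2 + \<eta>) ^ n) powr l"
proof -
  have "1 - expected_pc \<rho> \<epsilon> n k = (\<Sum>A\<in>bmats n k. bern_mat \<rho> n k A * zero_error \<epsilon> n k A)"
    using one_minus_expected_pc[OF e] .
  also have "\<dots> \<le> (\<Sum>A\<in>bmats n k. bern_mat \<rho> n k A * (light_term \<epsilon> n k W A + heavy_term \<epsilon> n k W l A))"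
    using zero_error_le_split[OF e W] l r by (intro sum_mono mult_left_mono bern_mat_nonneg) auto
  also have "\<dots> = (\<Sum>A\<in>bmats n k. bern_mat \<rho> n k A * light_term \<epsilon> n k W A)
                + (\<Sum>A\<in>bmats n k. bern_mat \<rho> n k A * heavy_term \<epsilon> n k W l A)"
    by (simp add: distrib_left sum.distrib)
  moreover have "(\<Sum>A\<in>bmats n k. bern_mat \<rho> n k A * light_term \<epsilon> n k W A)
      \<le> real (card (light k W)) * (1 - q * (1 - bhattacharyya \<epsilon>)) ^ n"
    using e r q by (intro light_term_average) auto
  moreover have "(\<Sum>A\<in>bmats n k. bern_mat \<rho> n k A * heavy_term \<epsilon> n k W l A)
      \<le> gallager_factor \<epsilon> l ^ n * (2 ^ k * (1/2 + \<eta>) ^ n) powr l"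
    using e r l eta0 eta by (intro heavy_term_average) auto
  ultimately show ?thesis by linarith
qed


section \<open>Choice of the parameters\<close>

text \<open>Below capacity, Gallager's exponent is negative for a small l > 0: the function
  l \<mapsto> gallager_factor eps l * 2^(l(R - 1)) equals 1 at l = 0 and has derivative
  (h(eps) + R - 1) ln 2 < 0 there.\<close>
lemma gallager_exponent_negative:
  fixes \<epsilon> R :: real
  assumes e: "0 < \<epsilon>" "\<epsilon> < 1" and R: "R < 1 - bin_entropy \<epsilon>"
  shows "\<exists>l. 0 < l \<and> l < 1 \<and> gallager_factor \<epsilon> l * 2 powr (l * (R - 1)) < 1"
proof -
  define g where "g = (\<lambda>l. (exp ((1 - l) * ln (1 - \<epsilon>)) + exp ((1 - l) * ln \<epsilon>)) * exp (l * ((R - 1) * ln 2)))"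
  define D where "D = (- ln (1 - \<epsilon>) * (1 - \<epsilon>) - ln \<epsilon> * \<epsilon>) + (R - 1) * ln 2"
  have "(g has_real_derivative D) (at 0)"
    unfolding g_def D_def using e by (auto intro!: derivative_eq_intros simp: algebra_simps)
  moreover have "D < 0"
  proof -
    have "bin_entropy \<epsilon> * ln 2 = - ln (1 - \<epsilon>) * (1 - \<epsilon>) - ln \<epsilon> * \<epsilon>"
      unfolding bin_entropy_def log_def by (simp add: field_simps)
    then have "D = (bin_entropy \<epsilon> + R - 1) * ln 2" unfolding D_def by (simp add: algebra_simps)
    then show ?thesis using R by (simp add: mult_neg_pos)
  qed
  ultimately obtain d where d: "d > 0" "\<And>h. h > 0 \<Longrightarrow> h < d \<Longrightarrow> g (0 + h) < g 0"
    using DERIV_neg_dec_right by blast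
  define l where "l = min (d/2) (1/2)"
  have l: "0 < l" "l < 1" "l < d" using d by (auto simp: l_def)
  have "g l < 1" using d(2)[OF l(1) l(3)] e by (simp add: g_def)
  moreover have "g l = gallager_factor \<epsilon> l * 2 powr (l * (R - 1))"
    unfolding g_def gallager_factor_def using e by (simp add: powr_def mult_ac)
  ultimately show ?thesis using l by auto
qed

text \<open>Leaving room between R and capacity, the heavy-word bias eta can be taken
  positive while keeping the Gallager rate below 1.\<close>
lemma gallager_parameters:
  fixes \<epsilon> R :: real
  assumes e: "0 < \<epsilon>" "\<epsilon> < 1" and R: "R < 1 - bin_entropy \<epsilon>"
  shows "\<exists>l \<eta>. 0 < l \<and> l < 1 \<and> 0 < \<eta> \<and> gallager_factor \<epsilon> l * (2 powr R * (1/2 + \<eta>)) powr l < 1"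
proof -
  define R' where "R' = (R + (1 - bin_entropy \<epsilon>)) / 2"
  have R': "R < R'" "R' < 1 - bin_entropy \<epsilon>" using R by (auto simp: R'_def)
  obtain l where l: "0 < l" "l < 1" and rate: "gallager_factor \<epsilon> l * 2 powr (l * (R' - 1)) < 1"
    using gallager_exponent_negative[OF e R'(2)] by blast
  define \<eta> where "\<eta> = (2 powr (R' - R) - 1) / 2"
  have "1 < 2 powr (R' - R)" using R'(1) by simp
  then have \<eta>: "0 < \<eta>" by (simp add: \<eta>_def)
  have "2 powr R * (1/2 + \<eta>) = 2 powr (R' - 1)"
    by (simp add: \<eta>_def powr_diff field_simps)
  then have "(2 powr R * (1/2 + \<eta>)) powr l = 2 powr (l * (R' - 1))"
    by (simp add: powr_powr mult.commute)
  with l \<eta> rate show ?thesis by (intro exI[of _ l] exI[of _ \<eta>]) simp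
qed

lemma weight_threshold:
  fixes \<rho> \<eta> :: real
  assumes r: "0 < \<rho>" "\<rho> < 1" and \<eta>: "0 < \<eta>"
  shows "\<exists>W q. 1 \<le> W \<and> 0 < q \<and> q \<le> 1/2
    \<and> (\<forall>k z. z \<in> heavy k W \<longrightarrow> \<bar>parity_prob \<rho> k z - 1/2\<bar> \<le> \<eta>)
    \<and> (\<forall>k z. z \<in> light k W \<longrightarrow> q \<le> parity_prob \<rho> k z)"
proof -
  define rr where "rr = \<bar>1 - 2 * \<rho>\<bar>"
  have rr: "0 \<le> rr" "rr < 1" unfolding rr_def using r by auto
  obtain m where m: "rr ^ m < 2 * \<eta>" using real_arch_pow_inv[of "2 * \<eta>" rr] \<eta> rr by auto
  define W where "W = max 1 m"
  have "rr ^ W \<le> rr ^ m" using rr unfolding W_def by (intro power_decreasing) auto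
  with m have rW: "rr ^ W \<le> 2 * \<eta>" by simp
  have bias: "\<bar>parity_prob \<rho> k z - 1/2\<bar> = rr ^ weight k z / 2" for k z
  proof -
    have "parity_prob \<rho> k z - 1/2 = - ((1 - 2 * \<rho>) ^ weight k z / 2)"
      unfolding parity_prob_weight by (simp add: field_simps)
    then show ?thesis unfolding rr_def by (simp add: power_abs)
  qed
  have heavy: "\<bar>parity_prob \<rho> k z - 1/2\<bar> \<le> \<eta>" if "z \<in> heavy k W" for k z
  proof -
    have "rr ^ weight k z \<le> rr ^ W" using that rr by (auto simp: heavy_def intro!: power_decreasing)
    then show ?thesis using rW bias[of k z] by linarith
  qed
  have light: "(1 - rr) / 2 \<le> parity_prob \<rho> k z" if "z \<in> light k W" for k z
  proof -
    have "rr ^ weight k z \<le> rr ^ 1" using that rr by (intro power_decreasing) (auto simp: light_def)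
    moreover have "(1 - 2 * \<rho>) ^ weight k z \<le> rr ^ weight k z" unfolding rr_def power_abs[symmetric] by simp
    ultimately show ?thesis unfolding parity_prob_weight by simp
  qed
  have "1 \<le> W" "0 < (1 - rr) / 2" "(1 - rr) / 2 \<le> 1/2" using rr by (auto simp: W_def)
  with heavy light show ?thesis by blast
qed

lemma gallager_term_le:
  fixes M R \<eta> l :: real
  assumes kR: "real k \<le> R * real n" and M: "0 \<le> M" and \<eta>: "0 < 1/2 + \<eta>" and l: "0 \<le> l"
  shows "M ^ n * (2 ^ k * (1/2 + \<eta>) ^ n) powr l \<le> (M * (2 powr R * (1/2 + \<eta>)) powr l) ^ n"
proof -
  have base: "0 < 2 powr R * (1/2 + \<eta>)" using \<eta> by simp
  have "(2::real) ^ k = 2 powr real k" by (simp add: powr_realpow)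
  also have "\<dots> \<le> 2 powr (R * real n)" using kR by (intro powr_mono) auto
  also have "\<dots> = (2 powr R) ^ n" by (simp add: powr_powr[symmetric] powr_realpow)
  finally have "(2::real) ^ k * (1/2 + \<eta>) ^ n \<le> (2 powr R * (1/2 + \<eta>)) ^ n"
    using \<eta> by (simp add: power_mult_distrib mult_right_mono)
  then have "(2 ^ k * (1/2 + \<eta>) ^ n) powr l \<le> ((2 powr R * (1/2 + \<eta>)) ^ n) powr l"
    using \<eta> l by (intro powr_mono2) auto
  also have "\<dots> = ((2 powr R * (1/2 + \<eta>)) powr real n) powr l"
    using base by (simp add: powr_realpow)
  also have "\<dots> = ((2 powr R * (1/2 + \<eta>)) powr l) powr real n"
    by (simp add: powr_powr mult.commute)
  also have "\<dots> = ((2 powr R * (1/2 + \<eta>)) powr l) ^ n"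
    by (rule powr_realpow) (use \<eta> in simp)
  finally show ?thesis
    using M by (simp add: power_mult_distrib mult_left_mono)
qed

lemma expected_error_rate_bound:
  assumes e: "0 < \<epsilon>" "\<epsilon> < 1" and r: "0 \<le> \<rho>" "\<rho> \<le> 1" and R: "0 < R"
    and W: "1 \<le> W" and l: "0 < l" "l < 1" and \<eta>: "0 < \<eta>"
    and heavy: "\<forall>k z. z \<in> heavy k W \<longrightarrow> \<bar>parity_prob \<rho> k z - 1/2\<bar> \<le> \<eta>"
    and light: "\<forall>k z. z \<in> light k W \<longrightarrow> q \<le> parity_prob \<rho> k z"
    and q: "0 \<le> q" "q \<le> 1"
  shows "1 - expected_pc \<rho> \<epsilon> n (nat \<lfloor>R * real n\<rfloor>)
    \<le> real W * (R * real n + 1) ^ W * (1 - q * (1 - bhattacharyya \<epsilon>)) ^ n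
     + (gallager_factor \<epsilon> l * (2 powr R * (1/2 + \<eta>)) powr l) ^ n"
proof -
  define k where "k = nat \<lfloor>R * real n\<rfloor>"
  have kR: "real k \<le> R * real n" unfolding k_def using R by simp
  have "q * (1 - bhattacharyya \<epsilon>) \<le> 1 * 1"
    using q bhattacharyya_le_1[of \<epsilon>] bhattacharyya_nonneg[of \<epsilon>] e by (intro mult_mono) auto
  then have \<theta>: "0 \<le> 1 - q * (1 - bhattacharyya \<epsilon>)" by simp
  have "real (card (light k W)) \<le> real W * (real k + 1) ^ W" by (rule card_light)
  also have "\<dots> \<le> real W * (R * real n + 1) ^ W" using kR by (intro mult_left_mono power_mono) auto
  finally have "real (card (light k W)) \<le> real W * (R * real n + 1) ^ W" .
  then have light_part: "real (card (light k W)) * (1 - q * (1 - bhattacharyya \<epsilon>)) ^ n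
      \<le> real W * (R * real n + 1) ^ W * (1 - q * (1 - bhattacharyya \<epsilon>)) ^ n"
    using \<theta> by (intro mult_right_mono) auto
  have "gallager_factor \<epsilon> l ^ n * (2 ^ k * (1/2 + \<eta>) ^ n) powr l
      \<le> (gallager_factor \<epsilon> l * (2 powr R * (1/2 + \<eta>)) powr l) ^ n"
    using kR \<eta> l e by (intro gallager_term_le) (auto simp: gallager_factor_def)
  moreover have "1 - expected_pc \<rho> \<epsilon> n k \<le> real (card (light k W)) * (1 - q * (1 - bhattacharyya \<epsilon>)) ^ n
     + gallager_factor \<epsilon> l ^ n * (2 ^ k * (1/2 + \<eta>) ^ n) powr l"
    using heavy light \<eta> by (intro expected_error_le[OF e r W l]) auto
  ultimately show ?thesis using light_part unfolding k_def by linarith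
qed

lemma light_rate_bounds:
  assumes q: "0 < q" "q \<le> 1/2" and e: "0 \<le> \<epsilon>" "\<epsilon> \<le> 1" "\<epsilon> \<noteq> 1/2"
  shows "0 < 1 - q * (1 - bhattacharyya \<epsilon>)" and "1 - q * (1 - bhattacharyya \<epsilon>) < 1"
proof -
  have B: "0 \<le> bhattacharyya \<epsilon>" "bhattacharyya \<epsilon> < 1"
    using e by (auto intro: bhattacharyya_nonneg bhattacharyya_less_1)
  have "q * (1 - bhattacharyya \<epsilon>) \<le> 1/2 * 1" using q B by (intro mult_mono) auto
  then show "0 < 1 - q * (1 - bhattacharyya \<epsilon>)" by simp
  show "1 - q * (1 - bhattacharyya \<epsilon>) < 1" using q B by simp
qed

lemma polynomial_times_geometric_tendsto_0:
  fixes R t c :: real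
  assumes "0 < R" "0 < t" "t < 1" "0 < c" "c < 1"
  shows "(\<lambda>n. real W * (R * real n + 1) ^ W * t ^ n + c ^ n) \<longlonglongrightarrow> 0"
proof -
  have "(\<lambda>n. (R * real n + 1) ^ W * t ^ n) \<longlonglongrightarrow> 0" using assms by real_asymp
  then have "(\<lambda>n. real W * ((R * real n + 1) ^ W * t ^ n)) \<longlonglongrightarrow> 0" by (rule tendsto_mult_right_zero)
  moreover have "(\<lambda>n. c ^ n) \<longlonglongrightarrow> 0" using assms by (intro LIMSEQ_power_zero) auto
  ultimately show ?thesis using tendsto_add[of _ 0 _ _ 0] by (simp add: mult.assoc)
qed

theorem theorem2:
  fixes \<epsilon> \<rho> R :: real
  assumes "0 < \<epsilon>" "\<epsilon> < 1/2"
    and "0 < R" "R < 1 - bin_entropy \<epsilon>"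
    and "0 < \<rho>" "\<rho> < 1"
  shows "(\<lambda>n. expected_pc \<rho> \<epsilon> n (nat \<lfloor>R * real n\<rfloor>)) \<longlonglongrightarrow> 1"
proof -
  have e: "0 < \<epsilon>" "\<epsilon> < 1" and r: "0 \<le> \<rho>" "\<rho> \<le> 1" using assms by auto
  obtain l \<eta> where l: "0 < l" "l < 1" and \<eta>: "0 < \<eta>"
    and rate: "gallager_factor \<epsilon> l * (2 powr R * (1/2 + \<eta>)) powr l < 1"
    using gallager_parameters[OF e assms(4)] by blast
  obtain W q where W: "1 \<le> W" and q: "0 < q" "q \<le> 1/2"
    and heavy: "\<forall>k z. z \<in> heavy k W \<longrightarrow> \<bar>parity_prob \<rho> k z - 1/2\<bar> \<le> \<eta>"
    and light: "\<forall>k z. z \<in> light k W \<longrightarrow> q \<le> parity_prob \<rho> k z"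
    using weight_threshold[OF assms(5,6) \<eta>] by blast
  define \<theta> where "\<theta> = 1 - q * (1 - bhattacharyya \<epsilon>)"
  define c where "c = gallager_factor \<epsilon> l * (2 powr R * (1/2 + \<eta>)) powr l"
  have \<theta>: "0 < \<theta>" "\<theta> < 1" unfolding \<theta>_def using light_rate_bounds[OF q] e assms(2) by auto
  have c: "0 < c" "c < 1"
    using rate e \<eta> unfolding c_def gallager_factor_def by (auto intro!: mult_pos_pos add_pos_pos)
  let ?bound = "\<lambda>n. real W * (R * real n + 1) ^ W * \<theta> ^ n + c ^ n"
  have "(\<lambda>n. 1 - expected_pc \<rho> \<epsilon> n (nat \<lfloor>R * real n\<rfloor>)) \<longlonglongrightarrow> 0"
  proof (rule tendsto_sandwich[of "\<lambda>_. 0" _ _ ?bound])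
    show "\<forall>\<^sub>F n in sequentially. 0 \<le> 1 - expected_pc \<rho> \<epsilon> n (nat \<lfloor>R * real n\<rfloor>)"
      using expected_pc_le_1[OF e r] by simp
    show "\<forall>\<^sub>F n in sequentially. 1 - expected_pc \<rho> \<epsilon> n (nat \<lfloor>R * real n\<rfloor>) \<le> ?bound n"
      using expected_error_rate_bound[OF e r assms(3) W l \<eta> heavy light] q
      unfolding \<theta>_def c_def by simp
  qed (use polynomial_times_geometric_tendsto_0[OF assms(3) \<theta> c] in auto)
  then have "(\<lambda>n. 1 - (1 - expected_pc \<rho> \<epsilon> n (nat \<lfloor>R * real n\<rfloor>))) \<longlonglongrightarrow> 1 - 0"
    by (intro tendsto_diff tendsto_const)
  then show ?thesis by simp
qed

end
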